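(* Let $k\ge1$ and $\ell\ge1$. Then $$\{n\in A_{2k}:\max\mathcal{CG}(n)=\max\mathcal{CG}_2(n)=F_{2k+2\ell}\}=\Big\{m+2F_{2k+2\ell}\ :\ m\in A_{2k},\ m\le\sum_{i=0}^{\ell-1}F_{2k+2i}\Big\}.$$
   Context: Fibonacci numbers: $F_1=F_2=1$, $F_{n+1}=F_n+F_{n-1}$ for $n\ge2$. Chung–Graham decomposition: every positive integer $n$ has a unique representation $n=\sum_{i\ge1}c_iF_{2i}$ with $c_i\in\{0,1,2\}$, only finitely many nonzero, such that whenever $c_i=c_j=2$ with $i<j$ there is $k$ with $i<k<j$ and $c_k=0$. Let $\mathcal{CG}(n)$ be the set of $F_{2i}$ with $c_i\neq0$, $\mathcal{CG}_1(n)$ the set of $F_{2i}$ with $c_i=1$, and $\mathcal{CG}_2(n)$ the set of $F_{2i}$ with $c_i=2$. For $k\ge1$, $A_{2k}=\{n\ge1:\min\mathcal{CG}(n)=F_{2k}\}$. *)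

theory Defs
  imports "HOL-Number_Theory.Fib"
begin

text \<open>Fibonacci numbers: the library fib has fib 0 = 0, fib 1 = fib 2 = 1, matching F_1 = F_2 = 1.
A Chung-Graham representation of n is a coefficient function c, where c i is the
coefficient of F_(2i) for i \<ge> 1 (c 0 = 0).\<close>

definition is_CG_rep :: "nat \<Rightarrow> (nat \<Rightarrow> nat) \<Rightarrow> bool" where
  "is_CG_rep n c \<longleftrightarrow>
     c 0 = 0 \<and> finite {i. c i \<noteq> 0} \<and> (\<forall>i. c i \<le> 2) \<and>
     (\<forall>i j. i < j \<and> c i = 2 \<and> c j = 2 \<longrightarrow> (\<exists>k. i < k \<and> k < j \<and> c k = 0)) \<and>
     n = (\<Sum>i\<in>{i. c i \<noteq> 0}. c i * fib (2 * i))"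

definition CG_coeff :: "nat \<Rightarrow> nat \<Rightarrow> nat" where
  "CG_coeff n = (THE c. is_CG_rep n c)"

definition CG :: "nat \<Rightarrow> nat set" where
  "CG n = {fib (2 * i) | i. i \<ge> 1 \<and> CG_coeff n i \<noteq> 0}"

definition CG1 :: "nat \<Rightarrow> nat set" where
  "CG1 n = {fib (2 * i) | i. i \<ge> 1 \<and> CG_coeff n i = 1}"

definition CG2 :: "nat \<Rightarrow> nat set" where
  "CG2 n = {fib (2 * i) | i. i \<ge> 1 \<and> CG_coeff n i = 2}"

definition A :: "nat \<Rightarrow> nat set" where
  "A k = {n. n \<ge> 1 \<and> Min (CG n) = fib (2 * k)}"

end

theory Submission
  imports Defs
begin

text \<open>Think of a Chung-Graham representation as a digit string c (the coefficient of F_{2i} is c i).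
The digits at positions at most j of a valid string are worth less than F_{2j+2}; comparing top
digits gives uniqueness and a greedy choice gives existence, so CG_coeff n is the digit string
of n. If n has lowest digit at position k and top digit 2 at position K = k + l, deleting that
top digit leaves m = n - 2 F_{2K} with the same lower digits; conversely a 2 can be put on top
of the digits of m exactly when every 2 among them is already followed by a 0 below K. For
digits supported in [k, K-1] this closure condition is equivalent to m being at most
F_{2k} + F_{2k+2} + ... + F_{2K-2}: a 2 at position i followed by nonzero digits up to K-1 is
already worth more than this sum, since F_{2k} + ... + F_{2i-2} < F_{2i}, and closed strings
stay within it by induction.\<close>

definition CG_valid :: "(nat \<Rightarrow> nat) \<Rightarrow> bool" where
  "CG_valid c \<longleftrightarrow> c 0 = 0 \<and> (\<forall>i. c i \<le> 2) \<and>
     (\<forall>i j. i < j \<and> c i = 2 \<and> c j = 2 \<longrightarrow> (\<exists>k. i < k \<and> k < j \<and> c k = 0))"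

definition CG_value :: "(nat \<Rightarrow> nat) \<Rightarrow> nat \<Rightarrow> nat" where
  "CG_value c j = (\<Sum>i\<le>j. c i * fib (2 * i))"

text \<open>A digit 2 may be placed at position j + 1 on top of c exactly when this holds.\<close>

definition CG_closed :: "(nat \<Rightarrow> nat) \<Rightarrow> nat \<Rightarrow> bool" where
  "CG_closed c j \<longleftrightarrow> (\<forall>i\<le>j. c i = 2 \<longrightarrow> (\<exists>z. i < z \<and> z \<le> j \<and> c z = 0))"

lemma CG_validD:
  assumes "CG_valid c"
  shows "c 0 = 0" and "c i \<le> 2"
    and "\<lbrakk>i < i'; c i = 2; c i' = 2\<rbrakk> \<Longrightarrow> \<exists>z. i < z \<and> z < i' \<and> c z = 0"
  using assms unfolding CG_valid_def by blast+

lemma CG_closedD: "CG_closed c j \<Longrightarrow> i \<le> j \<Longrightarrow> c i = 2 \<Longrightarrow> \<exists>z. i < z \<and> z \<le> j \<and> c z = 0"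
  unfolding CG_closed_def by blast

lemma fib_even_Suc: "fib (2 * Suc j) = fib (2 * j + 1) + fib (2 * j)"
  by (simp add: numeral_2_eq_2)

lemma fib_odd_Suc: "fib (2 * Suc j + 1) = fib (2 * Suc j) + fib (2 * j + 1)"
  by (simp add: numeral_2_eq_2)

lemma sum_fib_even: "(\<Sum>i\<le>j. fib (2 * i)) + 1 = fib (2 * j + 1)"
  by (induction j) (simp_all add: fib_odd_Suc)

lemma fib_even_strict_mono: "strict_mono (\<lambda>i. fib (2 * i))"
  unfolding strict_mono_Suc_iff
proof
  fix i
  have "0 < fib (2 * i + 1)" by (rule fib_neq_0_nat) simp
  then show "fib (2 * i) < fib (2 * Suc i)" by (simp add: fib_even_Suc)
qed

lemma sum_fib_even_less: "(\<Sum>i\<in>{k..j}. fib (2 * i)) < fib (2 * Suc j)"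
proof -
  have "(\<Sum>i\<in>{k..j}. fib (2 * i)) \<le> (\<Sum>i\<le>j. fib (2 * i))"
    by (rule sum_mono2) auto
  moreover have "fib (2 * j + 1) \<le> fib (2 * Suc j)" by (rule fib_mono) simp
  ultimately show ?thesis using sum_fib_even[of j] by linarith
qed

lemma sum_fib_even_below_less:
  assumes "1 \<le> i" shows "(\<Sum>z\<in>{k..<i}. fib (2 * z)) < fib (2 * i)"
proof -
  obtain j where "i = Suc j" using assms by (cases i) auto
  then show ?thesis using sum_fib_even_less[of k j] by (simp add: atLeastLessThanSuc_atLeastAtMost)
qed

lemma sum_fib_even_shift:
  "(\<Sum>i<l. fib (2 * k + 2 * i)) = (\<Sum>i\<in>{k..<k + l}. fib (2 * i))"
proof -
  have "(\<Sum>i<l. fib (2 * k + 2 * i)) = (\<Sum>i\<in>{0..<l}. fib (2 * (i + k)))"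
    by (simp add: atLeast0LessThan algebra_simps)
  also have "\<dots> = (\<Sum>i\<in>{0 + k..<l + k}. fib (2 * i))"
    by (rule sum.shift_bounds_nat_ivl[symmetric])
  finally show ?thesis by (simp add: add.commute)
qed

lemma CG_value_Suc: "CG_value c (Suc j) = CG_value c j + c (Suc j) * fib (2 * Suc j)"
  by (simp add: CG_value_def)

lemma CG_value_cong: "(\<And>i. i \<le> j \<Longrightarrow> c i = d i) \<Longrightarrow> CG_value c j = CG_value d j"
  unfolding CG_value_def by (rule sum.cong) simp_all

lemma CG_value_upd_Suc: "CG_value (c(Suc j := v)) (Suc j) = CG_value c j + v * fib (2 * Suc j)"
proof -
  have "CG_value (c(Suc j := v)) j = CG_value c j" by (rule CG_value_cong) simp
  then show ?thesis by (simp add: CG_value_Suc)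
qed

lemma CG_closed_cong:
  assumes "\<And>i. i \<le> j \<Longrightarrow> c i = d i"
  shows "CG_closed c j \<longleftrightarrow> CG_closed d j"
proof -
  have "(\<exists>z. i < z \<and> z \<le> j \<and> c z = 0) \<longleftrightarrow> (\<exists>z. i < z \<and> z \<le> j \<and> d z = 0)" for i
    using assms by auto
  then show ?thesis unfolding CG_closed_def using assms by auto
qed

lemma CG_closed_Suc_iff:
  "CG_closed c (Suc j) \<longleftrightarrow> c (Suc j) = 0 \<or> c (Suc j) \<noteq> 2 \<and> CG_closed c j"
proof
  assume closed: "CG_closed c (Suc j)"
  have "c (Suc j) \<noteq> 2" using closed unfolding CG_closed_def by fastforce
  moreover have "CG_closed c j" if "c (Suc j) \<noteq> 0"
    unfolding CG_closed_def
  proof (intro allI impI)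
    fix i assume "i \<le> j" "c i = 2"
    then obtain z where "i < z" "z \<le> Suc j" "c z = 0"
      using closed unfolding CG_closed_def by (meson le_SucI)
    then show "\<exists>z. i < z \<and> z \<le> j \<and> c z = 0" using that by (metis le_Suc_eq)
  qed
  ultimately show "c (Suc j) = 0 \<or> c (Suc j) \<noteq> 2 \<and> CG_closed c j" by blast
next
  assume "c (Suc j) = 0 \<or> c (Suc j) \<noteq> 2 \<and> CG_closed c j"
  then show "CG_closed c (Suc j)"
    unfolding CG_closed_def
  proof (elim disjE conjE; intro allI impI)
    fix i assume "c (Suc j) = 0" "i \<le> Suc j" "c i = 2"
    then show "\<exists>z. i < z \<and> z \<le> Suc j \<and> c z = 0" by (metis le_less numeral_neq_zero)
  next
    fix i assume "c (Suc j) \<noteq> 2" "\<forall>i\<le>j. c i = 2 \<longrightarrow> (\<exists>z. i < z \<and> z \<le> j \<and> c z = 0)"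
      "i \<le> Suc j" "c i = 2"
    then show "\<exists>z. i < z \<and> z \<le> Suc j \<and> c z = 0" by (metis le_Suc_eq)
  qed
qed

lemma CG_closed_before_two: "CG_valid c \<Longrightarrow> c (Suc j) = 2 \<Longrightarrow> CG_closed c j"
  unfolding CG_valid_def CG_closed_def by (metis le_imp_less_Suc less_Suc_eq_le)

lemma CG_valid_upd_zero: "CG_valid c \<Longrightarrow> CG_valid (c(K := 0))"
  unfolding CG_valid_def by (metis fun_upd_apply zero_neq_numeral)

lemma CG_valid_upd_top:
  assumes valid: "CG_valid c" and above: "\<forall>i>j. c i = 0"
    and "v \<le> 2" and closed: "v = 2 \<longrightarrow> CG_closed c j"
  shows "CG_valid (c(Suc j := v))"
  unfolding CG_valid_def
proof (intro conjI allI impI)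
  show "(c(Suc j := v)) 0 = 0" "(c(Suc j := v)) i \<le> 2" for i
    using CG_validD(1,2)[OF valid] \<open>v \<le> 2\<close> by simp_all
next
  fix i i' assume two: "i < i' \<and> (c(Suc j := v)) i = 2 \<and> (c(Suc j := v)) i' = 2"
  show "\<exists>z>i. z < i' \<and> (c(Suc j := v)) z = 0"
  proof (cases "i' = Suc j")
    case True
    then have "v = 2" using two by simp
    then have "CG_closed c j" using closed by simp
    have "i \<le> j" "c i = 2" using two True by auto
    then obtain z where "i < z" "z \<le> j" "c z = 0" using CG_closedD[OF \<open>CG_closed c j\<close>] by blast
    then show ?thesis using True by (intro exI[of _ z]) simp
  next
    case False
    then have "c i' = 2" using two by simp
    have "i' \<le> j"
    proof (rule ccontr)
      assume "\<not> i' \<le> j"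
      then show False using above \<open>c i' = 2\<close> by simp
    qed
    then have "c i = 2" using two by auto
    moreover have "i < i'" using two by simp
    ultimately obtain z where "i < z" "z < i'" "c z = 0"
      using CG_validD(3)[OF valid] \<open>c i' = 2\<close> by blast
    then show ?thesis using \<open>i' \<le> j\<close> by (intro exI[of _ z]) simp
  qed
qed

lemma block_sum_bound:
  assumes valid: "CG_valid d"
  shows "(\<Sum>i\<in>{k..j}. d i * fib (2 * i)) \<le> (\<Sum>i\<in>{k..j}. fib (2 * i)) + fib (2 * j)"
    and "CG_closed d j \<Longrightarrow> (\<Sum>i\<in>{k..j}. d i * fib (2 * i)) \<le> (\<Sum>i\<in>{k..j}. fib (2 * i))"
proof -
  have "(\<Sum>i\<in>{k..j}. d i * fib (2 * i)) \<le> (\<Sum>i\<in>{k..j}. fib (2 * i)) + fib (2 * j) \<and>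
    (CG_closed d j \<longrightarrow> (\<Sum>i\<in>{k..j}. d i * fib (2 * i)) \<le> (\<Sum>i\<in>{k..j}. fib (2 * i)))"
  proof (induction j)
    case 0
    then show ?case by (cases k) simp_all
  next
    case (Suc j)
    show ?case
    proof (cases "k \<le> Suc j")
      case False
      then show ?thesis by simp
    next
      case True
      define D where "D = (\<Sum>i\<in>{k..j}. d i * fib (2 * i))"
      define T where "T = (\<Sum>i\<in>{k..j}. fib (2 * i))"
      have D: "(\<Sum>i\<in>{k..Suc j}. d i * fib (2 * i)) = D + d (Suc j) * fib (2 * Suc j)"
        and T: "(\<Sum>i\<in>{k..Suc j}. fib (2 * i)) = T + fib (2 * Suc j)"
        unfolding D_def T_def using True by (simp_all add: atLeastAtMostSuc_conv)
      have IH: "D \<le> T + fib (2 * j)" "CG_closed d j \<Longrightarrow> D \<le> T"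
        using Suc.IH unfolding D_def T_def by blast+
      have "fib (2 * j) \<le> fib (2 * Suc j)" by (rule fib_mono) simp
      have "d (Suc j) \<le> 2" using valid by (simp add: CG_valid_def)
      then consider "d (Suc j) = 0" | "d (Suc j) = 1" | "d (Suc j) = 2" by linarith
      then show ?thesis
      proof cases
        case 1
        then show ?thesis unfolding D T using IH \<open>fib (2 * j) \<le> fib (2 * Suc j)\<close> by simp
      next
        case 2
        then show ?thesis
          unfolding D T using IH CG_closed_Suc_iff[of d j] \<open>fib (2 * j) \<le> fib (2 * Suc j)\<close> by simp
      next
        case 3
        then show ?thesis unfolding D T
          using IH CG_closed_Suc_iff[of d j] CG_closed_before_two[OF valid, of j] by simp
      qed
    qed
  qed
  then show "(\<Sum>i\<in>{k..j}. d i * fib (2 * i)) \<le> (\<Sum>i\<in>{k..j}. fib (2 * i)) + fib (2 * j)"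
    and "CG_closed d j \<Longrightarrow> (\<Sum>i\<in>{k..j}. d i * fib (2 * i)) \<le> (\<Sum>i\<in>{k..j}. fib (2 * i))"
    by blast+
qed

lemma CG_value_less_fib:
  assumes "CG_valid c"
  shows "CG_value c j < fib (2 * Suc j)"
proof -
  have "CG_value c j = (\<Sum>i\<in>{0..j}. c i * fib (2 * i))"
    by (simp add: CG_value_def atMost_atLeast0)
  also have "\<dots> \<le> (\<Sum>i\<in>{0..j}. fib (2 * i)) + fib (2 * j)"
    by (rule block_sum_bound(1)[OF assms])
  also have "\<dots> < fib (2 * Suc j)"
    using sum_fib_even[of j] by (simp add: atMost_atLeast0 fib_even_Suc)
  finally show ?thesis .
qed

lemma CG_value_less_of_top_less:
  assumes "CG_valid d" and "d (Suc j) < c (Suc j)"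
  shows "CG_value d (Suc j) < CG_value c (Suc j)"
proof -
  have "CG_value d (Suc j) = CG_value d j + d (Suc j) * fib (2 * Suc j)"
    by (rule CG_value_Suc)
  also have "\<dots> < (d (Suc j) + 1) * fib (2 * Suc j)"
    using CG_value_less_fib[OF assms(1), of j] by simp
  also have "\<dots> \<le> c (Suc j) * fib (2 * Suc j)"
    using assms(2) by (intro mult_le_mono1) simp
  also have "\<dots> \<le> CG_value c (Suc j)"
    by (simp add: CG_value_Suc)
  finally show ?thesis .
qed

lemma CG_valid_eqI:
  "CG_valid c \<Longrightarrow> CG_valid d \<Longrightarrow> \<forall>i>j. c i = d i \<Longrightarrow> CG_value c j = CG_value d j \<Longrightarrow> c = d"
proof (induction j)
  case 0
  show ?case
  proof
    fix i show "c i = d i"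
      using "0.prems"(3) CG_validD(1)[OF "0.prems"(1)] CG_validD(1)[OF "0.prems"(2)]
      by (cases i) simp_all
  qed
next
  case (Suc j)
  have top: "c (Suc j) = d (Suc j)"
    using CG_value_less_of_top_less[OF Suc.prems(1), of j d]
      CG_value_less_of_top_less[OF Suc.prems(2), of j c] Suc.prems(4) by linarith
  then have "CG_value c j = CG_value d j" using Suc.prems(4) by (simp add: CG_value_Suc)
  moreover have "\<forall>i>j. c i = d i" using Suc.prems(3) top by (metis Suc_lessI)
  ultimately show ?case using Suc.IH Suc.prems(1,2) by blast
qed

text \<open>The closure clause is the invariant that allows a top digit 2 in the next step.\<close>

lemma CG_valid_exists:
  assumes "n < fib (2 * Suc j)"
  shows "\<exists>c. CG_valid c \<and> (\<forall>i>j. c i = 0) \<and> CG_value c j = n \<and>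
    (n < fib (2 * j + 1) \<longrightarrow> CG_closed c j)"
  using assms
proof (induction j arbitrary: n)
  case 0
  have "CG_valid (\<lambda>_. 0)" "CG_closed (\<lambda>_. 0) 0" by (simp_all add: CG_valid_def CG_closed_def)
  then show ?case using "0.prems" by (intro exI[of _ "\<lambda>_. 0"]) (simp add: CG_value_def)
next
  case (Suc j)
  define F where "F = fib (2 * Suc j)"
  have extend: "\<exists>c'. CG_valid c' \<and> (\<forall>i>Suc j. c' i = 0) \<and> CG_value c' (Suc j) = r + v * F \<and>
      (v = 0 \<or> v = 1 \<and> r < fib (2 * j + 1) \<longrightarrow> CG_closed c' (Suc j))"
    if r: "r < F" and v: "v \<le> 2" "v = 2 \<Longrightarrow> r < fib (2 * j + 1)" for r v
  proof -
    obtain c where c: "CG_valid c" "\<forall>i>j. c i = 0" "CG_value c j = r"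
        "r < fib (2 * j + 1) \<longrightarrow> CG_closed c j"
      using Suc.IH[of r] r unfolding F_def by blast
    have "CG_closed (c(Suc j := v)) (Suc j) \<longleftrightarrow> v = 0 \<or> v \<noteq> 2 \<and> CG_closed c j"
      using CG_closed_Suc_iff[of "c(Suc j := v)" j] CG_closed_cong[of j "c(Suc j := v)" c] by simp
    moreover have "CG_valid (c(Suc j := v))"
      using CG_valid_upd_top[OF c(1,2) v(1)] c(4) v(2) by blast
    moreover have "\<forall>i>Suc j. (c(Suc j := v)) i = 0" using c(2) by simp
    ultimately show ?thesis
      using c(3,4) CG_value_upd_Suc[of c j v] unfolding F_def by (intro exI[of _ "c(Suc j := v)"]) auto
  qed
  have fibs: "fib (2 * Suc (Suc j)) = fib (2 * Suc j + 1) + F" "fib (2 * Suc j + 1) = F + fib (2 * j + 1)"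
    "fib (2 * j + 1) \<le> F"
    unfolding F_def by (simp_all add: fib_even_Suc fib_odd_Suc)
  consider "n < F" | "F \<le> n" "n < 2 * F" | "2 * F \<le> n" by linarith
  then show ?case
  proof cases
    case 1
    then show ?thesis using extend[of n 0] by fastforce
  next
    case 2
    then have "n - F < F" by linarith
    then obtain c where c: "CG_valid c" "\<forall>i>Suc j. c i = 0" "CG_value c (Suc j) = n"
        "n - F < fib (2 * j + 1) \<longrightarrow> CG_closed c (Suc j)"
      using extend[of "n - F" 1] 2 by auto
    moreover have "n < fib (2 * Suc j + 1) \<longrightarrow> n - F < fib (2 * j + 1)"
      using fibs(2) 2 by auto
    ultimately show ?thesis by blast
  next
    case 3
    have "n - 2 * F < fib (2 * j + 1)" using 3 Suc.prems fibs by linarith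
    then obtain c where "CG_valid c" "\<forall>i>Suc j. c i = 0" "CG_value c (Suc j) = n"
      using extend[of "n - 2 * F" 2] 3 fibs(3) by auto
    moreover have "\<not> n < fib (2 * Suc j + 1)" using 3 fibs(2,3) by linarith
    ultimately show ?thesis by blast
  qed
qed

lemma sum_support_eq_CG_value:
  assumes "\<forall>i>j. c i = 0"
  shows "(\<Sum>i\<in>{i. c i \<noteq> 0}. c i * fib (2 * i)) = CG_value c j"
  unfolding CG_value_def
proof (rule sum.mono_neutral_left)
  show "{i. c i \<noteq> 0} \<subseteq> {..j}" using assms by (auto simp: not_less[symmetric])
qed simp_all

lemma is_CG_rep_altdef:
  "is_CG_rep n c \<longleftrightarrow> CG_valid c \<and> finite {i. c i \<noteq> 0} \<and>
     n = (\<Sum>i\<in>{i. c i \<noteq> 0}. c i * fib (2 * i))"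
  unfolding is_CG_rep_def CG_valid_def by blast

lemma is_CG_rep_iff:
  "is_CG_rep n c \<longleftrightarrow> CG_valid c \<and> (\<exists>j. (\<forall>i>j. c i = 0) \<and> n = CG_value c j)"
proof
  assume rep: "is_CG_rep n c"
  then obtain j where "\<forall>i\<in>{i. c i \<noteq> 0}. i \<le> j"
    unfolding is_CG_rep_altdef using finite_nat_set_iff_bounded_le by blast
  then have above: "\<forall>i>j. c i = 0" by (auto simp: not_less[symmetric])
  then show "CG_valid c \<and> (\<exists>j. (\<forall>i>j. c i = 0) \<and> n = CG_value c j)"
    using rep sum_support_eq_CG_value[OF above] unfolding is_CG_rep_altdef by auto
next
  assume "CG_valid c \<and> (\<exists>j. (\<forall>i>j. c i = 0) \<and> n = CG_value c j)"
  then obtain j where valid: "CG_valid c" and above: "\<forall>i>j. c i = 0" and n: "n = CG_value c j"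
    by blast
  have "{i. c i \<noteq> 0} \<subseteq> {..j}" using above by (auto simp: not_less[symmetric])
  then have "finite {i. c i \<noteq> 0}" using finite_subset by blast
  then show "is_CG_rep n c"
    using valid n sum_support_eq_CG_value[OF above] unfolding is_CG_rep_altdef by auto
qed

lemma is_CG_rep_unique:
  assumes "is_CG_rep n c" and "is_CG_rep n d"
  shows "c = d"
proof -
  obtain j where c: "CG_valid c" "\<forall>i>j. c i = 0" "n = CG_value c j"
    using assms(1) is_CG_rep_iff by blast
  obtain j' where d: "CG_valid d" "\<forall>i>j'. d i = 0" "n = CG_value d j'"
    using assms(2) is_CG_rep_iff by blast
  have c': "\<forall>i>max j j'. c i = 0" and d': "\<forall>i>max j j'. d i = 0" using c(2) d(2) by simp_all
  have "CG_value c (max j j') = CG_value d (max j j')"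
    using c(3) d(3) sum_support_eq_CG_value[OF c(2)] sum_support_eq_CG_value[OF c']
      sum_support_eq_CG_value[OF d(2)] sum_support_eq_CG_value[OF d'] by simp
  moreover have "\<forall>i>max j j'. c i = d i" using c' d' by simp
  ultimately show ?thesis using CG_valid_eqI[OF c(1) d(1)] by blast
qed

lemma CG_coeff_eqI: "is_CG_rep n c \<Longrightarrow> CG_coeff n = c"
  unfolding CG_coeff_def using is_CG_rep_unique by blast

lemma is_CG_rep_CG_coeff: "is_CG_rep n (CG_coeff n)"
proof -
  have "n \<le> fib (2 * n)" using strict_mono_imp_increasing[OF fib_even_strict_mono] by simp
  also have "\<dots> < fib (2 * Suc n)" using strict_monoD[OF fib_even_strict_mono, of n "Suc n"] by simp
  finally obtain c where "CG_valid c" "\<forall>i>n. c i = 0" "CG_value c n = n"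
    using CG_valid_exists by blast
  then have "is_CG_rep n c" using is_CG_rep_iff by metis
  then show ?thesis using CG_coeff_eqI by simp
qed

lemma CG_valid_CG_coeff: "CG_valid (CG_coeff n)"
  using is_CG_rep_CG_coeff is_CG_rep_iff by blast

lemma finite_CG_coeff_support: "finite {i. CG_coeff n i \<noteq> 0}"
  using is_CG_rep_CG_coeff unfolding is_CG_rep_altdef by blast

lemma CG_coeff_mult_fib_le: "CG_coeff n i * fib (2 * i) \<le> n"
proof (cases "CG_coeff n i = 0")
  case False
  have "CG_coeff n i * fib (2 * i) \<le> (\<Sum>i\<in>{i. CG_coeff n i \<noteq> 0}. CG_coeff n i * fib (2 * i))"
    by (rule member_le_sum) (use False finite_CG_coeff_support in simp_all)
  also have "\<dots> = n"
    using is_CG_rep_CG_coeff unfolding is_CG_rep_altdef by simp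
  finally show ?thesis .
qed simp

lemma CG_coeff_eq_0_above:
  assumes "n < fib (2 * Suc j)" and "j < i"
  shows "CG_coeff n i = 0"
proof (rule ccontr)
  assume "CG_coeff n i \<noteq> 0"
  then have "fib (2 * i) \<le> CG_coeff n i * fib (2 * i)" by simp
  also have "\<dots> \<le> n" by (rule CG_coeff_mult_fib_le)
  also have "\<dots> < fib (2 * Suc j)" by (rule assms(1))
  also have "\<dots> \<le> fib (2 * i)" using assms(2) by (intro fib_mono) simp
  finally show False by simp
qed

lemma CG_value_CG_coeff: "\<forall>i>j. CG_coeff n i = 0 \<Longrightarrow> CG_value (CG_coeff n) j = n"
  using is_CG_rep_CG_coeff[of n] sum_support_eq_CG_value[of j "CG_coeff n"]
  unfolding is_CG_rep_altdef by simp

lemma CG_eq_image: "CG n = (\<lambda>i. fib (2 * i)) ` {i. CG_coeff n i \<noteq> 0}"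
proof -
  have "{i. 1 \<le> i \<and> CG_coeff n i \<noteq> 0} = {i. CG_coeff n i \<noteq> 0}"
    using CG_validD(1)[OF CG_valid_CG_coeff, of n] by (auto simp: Suc_le_eq intro!: gr0I)
  then show ?thesis unfolding CG_def by blast
qed

lemma CG2_eq_image: "CG2 n = (\<lambda>i. fib (2 * i)) ` {i. CG_coeff n i = 2}"
proof -
  have "{i. 1 \<le> i \<and> CG_coeff n i = 2} = {i. CG_coeff n i = 2}"
    using CG_validD(1)[OF CG_valid_CG_coeff, of n] by (auto simp: Suc_le_eq intro!: gr0I)
  then show ?thesis unfolding CG2_def by blast
qed

lemma Min_fib_even_image:
  "finite S \<Longrightarrow> S \<noteq> {} \<Longrightarrow> Min ((\<lambda>i. fib (2 * i)) ` S) = fib (2 * Min S)"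
  using mono_Min_commute[OF strict_mono_mono[OF fib_even_strict_mono]] by metis

lemma Max_fib_even_image:
  "finite S \<Longrightarrow> S \<noteq> {} \<Longrightarrow> Max ((\<lambda>i. fib (2 * i)) ` S) = fib (2 * Max S)"
  using mono_Max_commute[OF strict_mono_mono[OF fib_even_strict_mono]] by metis

lemma fib_even_eq_iff: "fib (2 * i) = fib (2 * j) \<longleftrightarrow> i = j"
  using strict_mono_eq[OF fib_even_strict_mono] by simp

lemma mem_A_iff:
  assumes "1 \<le> k"
  shows "n \<in> A k \<longleftrightarrow> CG_coeff n k \<noteq> 0 \<and> (\<forall>i<k. CG_coeff n i = 0)"
proof -
  define S where "S = {i. CG_coeff n i \<noteq> 0}"
  have fin: "finite S" unfolding S_def by (rule finite_CG_coeff_support)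
  have n_sum: "n = (\<Sum>i\<in>S. CG_coeff n i * fib (2 * i))"
    using is_CG_rep_CG_coeff unfolding is_CG_rep_altdef S_def by simp
  have Min_CG: "Min (CG n) = fib (2 * Min S)" if "S \<noteq> {}"
    unfolding CG_eq_image S_def[symmetric] using Min_fib_even_image[OF fin that] .
  show ?thesis
  proof
    assume "n \<in> A k"
    then have "1 \<le> n" and Min: "Min (CG n) = fib (2 * k)" unfolding A_def by auto
    then have "S \<noteq> {}" using n_sum by auto
    then have "Min S = k" using Min Min_CG fib_even_eq_iff by simp
    then show "CG_coeff n k \<noteq> 0 \<and> (\<forall>i<k. CG_coeff n i = 0)"
      using Min_in[OF fin \<open>S \<noteq> {}\<close>] Min_le[OF fin] unfolding S_def by fastforce
  next
    assume coeff: "CG_coeff n k \<noteq> 0 \<and> (\<forall>i<k. CG_coeff n i = 0)"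
    then have "k \<in> S" unfolding S_def by simp
    have "Min S = k"
      by (rule Min_eqI[OF fin]) (use coeff \<open>k \<in> S\<close> in \<open>auto simp: S_def not_less[symmetric]\<close>)
    have "1 \<le> CG_coeff n k * fib (2 * k)" using coeff fib_neq_0_nat[of "2 * k"] assms by simp
    then have "1 \<le> n" using CG_coeff_mult_fib_le[of n k] by linarith
    then show "n \<in> A k"
      unfolding A_def using Min_CG \<open>k \<in> S\<close> \<open>Min S = k\<close> by auto
  qed
qed

lemma CG_top_two_iff:
  "CG2 n \<noteq> {} \<and> Max (CG n) = fib (2 * K) \<and> Max (CG2 n) = fib (2 * K) \<longleftrightarrow>
     CG_coeff n K = 2 \<and> (\<forall>i>K. CG_coeff n i = 0)"
proof -
  define S where "S = {i. CG_coeff n i \<noteq> 0}"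
  define S2 where "S2 = {i. CG_coeff n i = 2}"
  have fin: "finite S" unfolding S_def by (rule finite_CG_coeff_support)
  have "S2 \<subseteq> S" unfolding S_def S2_def by auto
  then have fin2: "finite S2" using fin finite_subset by blast
  have CG: "CG n = (\<lambda>i. fib (2 * i)) ` S" and CG2: "CG2 n = (\<lambda>i. fib (2 * i)) ` S2"
    unfolding S_def S2_def by (rule CG_eq_image, rule CG2_eq_image)
  show ?thesis
  proof
    assume top: "CG2 n \<noteq> {} \<and> Max (CG n) = fib (2 * K) \<and> Max (CG2 n) = fib (2 * K)"
    then have "S2 \<noteq> {}" using CG2 by simp
    then have "S \<noteq> {}" using \<open>S2 \<subseteq> S\<close> by blast
    have "Max S = K" "Max S2 = K"
      using top CG CG2 Max_fib_even_image[OF fin \<open>S \<noteq> {}\<close>] Max_fib_even_image[OF fin2 \<open>S2 \<noteq> {}\<close>]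
        fib_even_eq_iff by simp_all
    then show "CG_coeff n K = 2 \<and> (\<forall>i>K. CG_coeff n i = 0)"
      using Max_in[OF fin2 \<open>S2 \<noteq> {}\<close>] Max_ge[OF fin] unfolding S_def S2_def by fastforce
  next
    assume coeff: "CG_coeff n K = 2 \<and> (\<forall>i>K. CG_coeff n i = 0)"
    then have "K \<in> S2" "K \<in> S" unfolding S_def S2_def by simp_all
    have "Max S = K"
      by (rule Max_eqI[OF fin]) (use coeff \<open>K \<in> S\<close> in \<open>auto simp: S_def not_less[symmetric]\<close>)
    moreover have "Max S2 = K"
      by (rule Max_eqI[OF fin2]) (use coeff \<open>K \<in> S2\<close> in \<open>auto simp: S2_def not_less[symmetric]\<close>)
    ultimately show "CG2 n \<noteq> {} \<and> Max (CG n) = fib (2 * K) \<and> Max (CG2 n) = fib (2 * K)"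
      using CG CG2 Max_fib_even_image[OF fin] Max_fib_even_image[OF fin2] \<open>K \<in> S2\<close> \<open>K \<in> S\<close>
      by auto
  qed
qed

lemma sum_fib_even_less_of_not_closed:
  assumes valid: "CG_valid d" and below: "\<forall>i<k. d i = 0" and not_closed: "\<not> CG_closed d j"
  shows "(\<Sum>i\<in>{k..j}. fib (2 * i)) < (\<Sum>i\<in>{k..j}. d i * fib (2 * i))"
proof -
  obtain i where "i \<le> j" "d i = 2" and "\<not> (\<exists>z. i < z \<and> z \<le> j \<and> d z = 0)"
    using not_closed unfolding CG_closed_def by auto
  then have nonzero: "\<forall>z. i < z \<and> z \<le> j \<longrightarrow> d z \<noteq> 0" by auto
  have "k \<le> i"
  proof (rule ccontr)
    assume "\<not> k \<le> i"
    then show False using below \<open>d i = 2\<close> by simp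
  qed
  have "1 \<le> i" using CG_validD(1)[OF valid] \<open>d i = 2\<close> by (cases i) auto
  have "(\<Sum>z\<in>{Suc i..j}. fib (2 * z)) \<le> (\<Sum>z\<in>{Suc i..j}. d z * fib (2 * z))"
    using nonzero by (intro sum_mono) (auto simp: Suc_le_eq)
  then have tail: "fib (2 * i) + (\<Sum>z\<in>{i..j}. fib (2 * z)) \<le> (\<Sum>z\<in>{i..j}. d z * fib (2 * z))"
    using \<open>i \<le> j\<close> \<open>d i = 2\<close> by (simp add: sum.atLeast_Suc_atMost)
  have split: "{k..j} = {k..<i} \<union> {i..j}" using \<open>k \<le> i\<close> \<open>i \<le> j\<close> by auto
  have "(\<Sum>z\<in>{k..j}. fib (2 * z)) = (\<Sum>z\<in>{k..<i}. fib (2 * z)) + (\<Sum>z\<in>{i..j}. fib (2 * z))"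
    unfolding split by (rule sum.union_disjoint) auto
  also have "\<dots> < fib (2 * i) + (\<Sum>z\<in>{i..j}. fib (2 * z))"
    using sum_fib_even_below_less[OF \<open>1 \<le> i\<close>] by simp
  also have "\<dots> \<le> (\<Sum>z\<in>{i..j}. d z * fib (2 * z))" by (rule tail)
  also have "\<dots> \<le> (\<Sum>z\<in>{k..j}. d z * fib (2 * z))" using \<open>k \<le> i\<close> by (intro sum_mono2) auto
  finally show ?thesis .
qed

lemma CG_closed_iff_le_sum_fib:
  assumes valid: "CG_valid d" and below: "\<forall>i<k. d i = 0"
  shows "CG_closed d j \<longleftrightarrow> CG_value d j \<le> (\<Sum>i\<in>{k..j}. fib (2 * i))"
proof -
  have "CG_value d j = (\<Sum>i\<in>{k..j}. d i * fib (2 * i))"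
    unfolding CG_value_def by (rule sum.mono_neutral_right) (use below in auto)
  then show ?thesis
    using block_sum_bound(2)[OF valid, of j k] sum_fib_even_less_of_not_closed[OF valid below, of j]
    by linarith
qed

lemma CG_coeff_drop_top_two:
  assumes top: "CG_coeff n (Suc j) = 2" and above: "\<forall>i>Suc j. CG_coeff n i = 0"
  obtains m where "n = m + 2 * fib (2 * Suc j)" and "CG_coeff m = (CG_coeff n)(Suc j := 0)"
proof
  let ?c = "(CG_coeff n)(Suc j := 0)"
  have "CG_valid ?c" by (rule CG_valid_upd_zero[OF CG_valid_CG_coeff])
  moreover have "\<forall>i>j. ?c i = 0" using above by (simp add: Suc_lessI)
  moreover have "CG_value ?c j = CG_value (CG_coeff n) j" by (rule CG_value_cong) simp
  ultimately have "is_CG_rep (CG_value (CG_coeff n) j) ?c" unfolding is_CG_rep_iff by metis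
  then show "CG_coeff (CG_value (CG_coeff n) j) = ?c" by (rule CG_coeff_eqI)
  show "n = CG_value (CG_coeff n) j + 2 * fib (2 * Suc j)"
    using CG_value_CG_coeff[OF above] top by (simp add: CG_value_Suc)
qed

lemma CG_coeff_add_top_two:
  assumes above: "\<forall>i>j. CG_coeff m i = 0" and closed: "CG_closed (CG_coeff m) j"
  shows "CG_coeff (m + 2 * fib (2 * Suc j)) = (CG_coeff m)(Suc j := 2)"
proof (rule CG_coeff_eqI)
  let ?c = "(CG_coeff m)(Suc j := 2)"
  have "CG_valid ?c" using CG_valid_upd_top[OF CG_valid_CG_coeff above] closed by simp
  moreover have "\<forall>i>Suc j. ?c i = 0" using above by simp
  moreover have "m + 2 * fib (2 * Suc j) = CG_value ?c (Suc j)"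
    using CG_value_upd_Suc CG_value_CG_coeff[OF above] by simp
  ultimately show "is_CG_rep (m + 2 * fib (2 * Suc j)) ?c" unfolding is_CG_rep_iff by blast
qed

lemma mem_A_top_two_decompose:
  assumes "1 \<le> k" and "k \<le> j" and "n \<in> A k"
    and top: "CG_coeff n (Suc j) = 2" and above: "\<forall>i>Suc j. CG_coeff n i = 0"
  obtains m where "n = m + 2 * fib (2 * Suc j)" and "m \<in> A k"
    and "m \<le> (\<Sum>i\<in>{k..j}. fib (2 * i))"
proof -
  obtain m where n: "n = m + 2 * fib (2 * Suc j)" and coeff: "CG_coeff m = (CG_coeff n)(Suc j := 0)"
    using CG_coeff_drop_top_two[OF top above] .
  have agree: "CG_coeff m i = CG_coeff n i" if "i \<le> j" for i
    using that coeff by simp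
  have "m \<in> A k" using \<open>n \<in> A k\<close> \<open>k \<le> j\<close> agree unfolding mem_A_iff[OF \<open>1 \<le> k\<close>] by simp
  moreover have "CG_closed (CG_coeff m) j"
    using CG_closed_before_two[OF CG_valid_CG_coeff top]
      CG_closed_cong[of j "CG_coeff m" "CG_coeff n", OF agree] by blast
  moreover have "\<forall>i>j. CG_coeff m i = 0" using coeff above by (simp add: Suc_lessI)
  ultimately have "m \<le> (\<Sum>i\<in>{k..j}. fib (2 * i))"
    using CG_closed_iff_le_sum_fib[OF CG_valid_CG_coeff, of k m j] CG_value_CG_coeff
    unfolding mem_A_iff[OF \<open>1 \<le> k\<close>] by simp
  with n \<open>m \<in> A k\<close> show thesis by (rule that)
qed

lemma mem_A_top_two_compose:
  assumes "1 \<le> k" and "m \<in> A k" and "m \<le> (\<Sum>i\<in>{k..j}. fib (2 * i))"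
  shows "m + 2 * fib (2 * Suc j) \<in> A k" and "CG_coeff (m + 2 * fib (2 * Suc j)) (Suc j) = 2"
    and "\<forall>i>Suc j. CG_coeff (m + 2 * fib (2 * Suc j)) i = 0"
proof -
  have low: "CG_coeff m k \<noteq> 0" "\<forall>i<k. CG_coeff m i = 0"
    using \<open>m \<in> A k\<close> unfolding mem_A_iff[OF \<open>1 \<le> k\<close>] by simp_all
  have above: "\<forall>i>j. CG_coeff m i = 0"
    using CG_coeff_eq_0_above sum_fib_even_less[of k j] assms(3) by (meson le_less_trans)
  then have "k \<le> j" using low(1) by (meson not_le)
  have "CG_closed (CG_coeff m) j"
    using CG_closed_iff_le_sum_fib[OF CG_valid_CG_coeff low(2)] CG_value_CG_coeff[OF above] assms(3)
    by simp
  then have coeff: "CG_coeff (m + 2 * fib (2 * Suc j)) = (CG_coeff m)(Suc j := 2)"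
    by (rule CG_coeff_add_top_two[OF above])
  show "m + 2 * fib (2 * Suc j) \<in> A k"
    unfolding mem_A_iff[OF \<open>1 \<le> k\<close>] coeff using low \<open>k \<le> j\<close> by simp
  show "CG_coeff (m + 2 * fib (2 * Suc j)) (Suc j) = 2"
    and "\<forall>i>Suc j. CG_coeff (m + 2 * fib (2 * Suc j)) i = 0"
    unfolding coeff using above by simp_all
qed

theorem lemma3p6:
  fixes k l :: nat
  assumes "k \<ge> 1" and "l \<ge> 1"
  shows "{n \<in> A k. CG2 n \<noteq> {} \<and> Max (CG n) = fib (2 * k + 2 * l) \<and> Max (CG2 n) = fib (2 * k + 2 * l)}
       = {m + 2 * fib (2 * k + 2 * l) | m. m \<in> A k \<and> m \<le> (\<Sum>i<l. fib (2 * k + 2 * i))}"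
proof -
  define j where "j = k + l - 1"
  have "k \<le> j" and K: "k + l = Suc j" using assms(2) unfolding j_def by simp_all
  have top: "2 * k + 2 * l = 2 * Suc j" using K by simp
  have block: "(\<Sum>i<l. fib (2 * k + 2 * i)) = (\<Sum>i\<in>{k..j}. fib (2 * i))"
    unfolding sum_fib_even_shift K by (simp add: atLeastLessThanSuc_atLeastAtMost)
  show ?thesis
    unfolding top block CG_top_two_iff
  proof (intro set_eqI iffI)
    fix n assume "n \<in> {n \<in> A k. CG_coeff n (Suc j) = 2 \<and> (\<forall>i>Suc j. CG_coeff n i = 0)}"
    then obtain m where "n = m + 2 * fib (2 * Suc j)" "m \<in> A k" "m \<le> (\<Sum>i\<in>{k..j}. fib (2 * i))"
      using mem_A_top_two_decompose[OF assms(1) \<open>k \<le> j\<close>] by auto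
    then show "n \<in> {m + 2 * fib (2 * Suc j) |m. m \<in> A k \<and> m \<le> (\<Sum>i\<in>{k..j}. fib (2 * i))}"
      by blast
  next
    fix n assume "n \<in> {m + 2 * fib (2 * Suc j) |m. m \<in> A k \<and> m \<le> (\<Sum>i\<in>{k..j}. fib (2 * i))}"
    then obtain m where "n = m + 2 * fib (2 * Suc j)" "m \<in> A k" "m \<le> (\<Sum>i\<in>{k..j}. fib (2 * i))"
      by blast
    then show "n \<in> {n \<in> A k. CG_coeff n (Suc j) = 2 \<and> (\<forall>i>Suc j. CG_coeff n i = 0)}"
      using mem_A_top_two_compose[OF assms(1)] by simp
  qed
qed

end
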